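(* Let a target $T$ be fixed at an unknown point $(x_T,y_T)\in\mathbb{R}^2$, and consider a UAV with planar unicycle dynamics $\dot x=V\cos\psi$, $\dot y=V\sin\psi$, $\dot\psi=\omega$, where $V>0$ is a constant speed. Let $r(t)=\sqrt{(x(t)-x_T)^2+(y(t)-y_T)^2}$ be the range, and let the control input be $$\omega=\begin{cases} k\left[V\cos\!\left(\pi-\sin^{-1}\!\left(\frac{r_a}{r(t)}\right)\right)-\dot r(t)\right], & r(t)\ge r_a,\\ 0,&\text{otherwise},\end{cases}$$ where $k\neq 0$ is a constant gain and $r_a\ge 0$ is a constant parameter. If a stable circular motion exists for the closed-loop system, then its radius is $r^\star=\sqrt{r_a^2+\frac{1}{k^2}}$. Moreover, in that motion the UAV rotates clockwise if $k>0$ and counterclockwise if $k<0$.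
   Context: A stable circular motion means that the UAV moves around the target $T$ with a constant speed and at a constant distance (radius) $r$ from $T$. $\sin^{-1}$ denotes the principal branch of arcsine with values in $[-\pi/2,\pi/2]$. *)

theory Defs
  imports "HOL-Analysis.Analysis"
begin

definition range_to :: "real \<Rightarrow> real \<Rightarrow> real \<Rightarrow> real \<Rightarrow> real" where
  "range_to xT yT px py = sqrt ((px - xT)^2 + (py - yT)^2)"

definition guidance :: "real \<Rightarrow> real \<Rightarrow> real \<Rightarrow> real \<Rightarrow> real \<Rightarrow> real" where
  "guidance k V ra r rdot =
     (if r \<ge> ra then k * (V * cos (pi - arcsin (ra / r)) - rdot) else 0)"

end

theory Submission
  imports Defs
begin

text \<open>If the range stays constant, the UAV's velocity is orthogonal to the line of sight,
  and differentiating this orthogonality once more ties the (then constant) turn rate w to the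
  angular momentum c = (p - T) \<times> v of the motion: V^2 = w c. Orthogonality also gives
  c^2 = V^2 R^2, hence V^2 = w^2 R^2. On the other hand, at constant range the guidance law
  yields w = -k V sqrt (1 - (ra/R)^2), and comparing the two expressions for w^2 gives
  k^2 (R^2 - ra^2) = 1. The sign of c = V^2 / w is that of -k, which is the sense of rotation.\<close>

lemma guidance_at_range_ge:
  assumes "0 \<le> ra" "ra \<le> r" "0 < r"
  shows "guidance k V ra r rdot = - k * (V * sqrt (1 - (ra / r)^2) + rdot)"
proof -
  have "cos (arcsin (ra / r)) = sqrt (1 - (ra / r)^2)"
    using assms by (intro cos_arcsin) (auto intro: order_trans[of _ 0])
  then show ?thesis using assms by (simp add: guidance_def algebra_simps)
qed

lemma unicycle_constant_range_radial_velocity: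
  fixes x y psi :: "real \<Rightarrow> real"
  assumes "V \<noteq> 0"
    and dx: "\<And>t. (x has_real_derivative V * cos (psi t)) (at t)"
    and dy: "\<And>t. (y has_real_derivative V * sin (psi t)) (at t)"
    and range: "\<And>t. (x t - xT)^2 + (y t - yT)^2 = R^2"
  shows "(x t - xT) * cos (psi t) + (y t - yT) * sin (psi t) = 0"
proof -
  have "((\<lambda>t. (x t - xT)^2 + (y t - yT)^2) has_real_derivative
      2 * V * ((x t - xT) * cos (psi t) + (y t - yT) * sin (psi t))) (at t)"
    by (auto intro!: derivative_eq_intros dx dy simp: algebra_simps)
  moreover have "((\<lambda>t. (x t - xT)^2 + (y t - yT)^2) has_real_derivative 0) (at t)"
    using range by simp
  ultimately show ?thesis using \<open>V \<noteq> 0\<close> DERIV_unique by fastforce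
qed

lemma unicycle_constant_range_turn_rate:
  fixes x y psi :: "real \<Rightarrow> real"
  assumes "V \<noteq> 0"
    and dx: "\<And>t. (x has_real_derivative V * cos (psi t)) (at t)"
    and dy: "\<And>t. (y has_real_derivative V * sin (psi t)) (at t)"
    and dpsi: "\<And>t. (psi has_real_derivative w) (at t)"
    and range: "\<And>t. (x t - xT)^2 + (y t - yT)^2 = R^2"
  shows "V^2 = w * ((x t - xT) * (V * sin (psi t)) - (y t - yT) * (V * cos (psi t)))"
proof -
  define g where "g t = (x t - xT) * cos (psi t) + (y t - yT) * sin (psi t)" for t
  have "V * (cos (psi t) * cos (psi t)) + V * (sin (psi t) * sin (psi t)) = V"
    by (metis distrib_left mult_1_right sin_cos_squared_add3)
  then have "(g has_real_derivative
      V - w * ((x t - xT) * sin (psi t) - (y t - yT) * cos (psi t))) (at t)"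
    unfolding g_def
    by (auto intro!: derivative_eq_intros dx dy dpsi simp: algebra_simps)
  moreover have "g = (\<lambda>_. 0)"
    using unicycle_constant_range_radial_velocity[OF assms(1) dx dy range]
    by (auto simp: g_def)
  ultimately have "V - w * ((x t - xT) * sin (psi t) - (y t - yT) * cos (psi t)) = 0"
    using DERIV_unique DERIV_const by fastforce
  then have "V * V = V * (w * ((x t - xT) * sin (psi t) - (y t - yT) * cos (psi t)))"
    by simp
  then show ?thesis by (simp add: power2_eq_square algebra_simps)
qed

lemma cross_sq_eq_if_orthogonal:
  fixes a b p q :: real
  assumes "a * p + b * q = 0"
  shows "(a * q - b * p)^2 = (a^2 + b^2) * (p^2 + q^2)"
proof -
  have "(a * q - b * p)^2 + (a * p + b * q)^2 = (a^2 + b^2) * (p^2 + q^2)"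
    by (simp add: power2_eq_square algebra_simps)
  then show ?thesis using assms by simp
qed

lemma unicycle_constant_range_speed:
  fixes x y psi :: "real \<Rightarrow> real"
  assumes "V \<noteq> 0"
    and dx: "\<And>t. (x has_real_derivative V * cos (psi t)) (at t)"
    and dy: "\<And>t. (y has_real_derivative V * sin (psi t)) (at t)"
    and dpsi: "\<And>t. (psi has_real_derivative w) (at t)"
    and range: "\<And>t. (x t - xT)^2 + (y t - yT)^2 = R^2"
  shows "V^2 = w^2 * R^2"
proof -
  define c where "c = (x 0 - xT) * (V * sin (psi 0)) - (y 0 - yT) * (V * cos (psi 0))"
  have "c = V * ((x 0 - xT) * sin (psi 0) - (y 0 - yT) * cos (psi 0))"
    by (simp add: c_def algebra_simps)
  then have c_sq: "c^2 = V^2 * R^2"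
    using cross_sq_eq_if_orthogonal[OF unicycle_constant_range_radial_velocity[OF assms(1) dx dy range]]
      range[of 0] by (simp add: power_mult_distrib)
  have "V^2 = w * c"
    unfolding c_def by (rule unicycle_constant_range_turn_rate[OF assms])
  then have "V^2 * V^2 = (w * c)^2" by (simp add: power2_eq_square)
  also have "\<dots> = V^2 * (w^2 * R^2)" by (simp add: power_mult_distrib c_sq)
  finally show ?thesis
    using \<open>V \<noteq> 0\<close> by (metis mult_left_cancel power_not_zero)
qed

lemma radius_from_turn_rate:
  fixes V k ra R w :: real
  assumes "V \<noteq> 0" "k \<noteq> 0" "0 \<le> ra" "ra \<le> R" "0 < R"
    and turn: "V^2 = w^2 * R^2"
    and w: "w = - k * V * sqrt (1 - (ra / R)^2)"
  shows "R = sqrt (ra^2 + 1 / k^2)"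
proof -
  have "(ra / R)^2 \<le> 1" using assms by (simp add: power_le_one)
  then have "w^2 * R^2 = k^2 * V^2 * (R^2 - ra^2)"
    using w \<open>0 < R\<close> by (simp add: power_mult_distrib power_divide field_simps)
  with turn \<open>V \<noteq> 0\<close> have "k^2 * (R^2 - ra^2) = 1"
    by (simp add: mult.assoc)
  then have "R^2 = ra^2 + 1 / k^2"
    using \<open>k \<noteq> 0\<close> by (simp add: field_simps)
  then show ?thesis using \<open>0 < R\<close> by (simp add: real_sqrt_unique)
qed

theorem lemma1:
  fixes x y psi :: "real \<Rightarrow> real" and xT yT V k ra :: real
  assumes V_pos: "V > 0" and k_nz: "k \<noteq> 0" and ra_nonneg: "ra \<ge> 0"
    and dx: "\<And>t. (x has_real_derivative V * cos (psi t)) (at t)"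
    and dy: "\<And>t. (y has_real_derivative V * sin (psi t)) (at t)"
    and dpsi: "\<And>t. (psi has_real_derivative
                 guidance k V ra (range_to xT yT (x t) (y t))
                   (deriv (\<lambda>s. range_to xT yT (x s) (y s)) t)) (at t)"
    and circ: "\<And>t. range_to xT yT (x t) (y t) = R"
  shows "R = sqrt (ra^2 + 1 / k^2)
    \<and> (k > 0 \<longrightarrow> (\<forall>t. (x t - xT) * (V * sin (psi t)) - (y t - yT) * (V * cos (psi t)) < 0
                      \<and> deriv psi t < 0))
    \<and> (k < 0 \<longrightarrow> (\<forall>t. (x t - xT) * (V * sin (psi t)) - (y t - yT) * (V * cos (psi t)) > 0
                      \<and> deriv psi t > 0))"
proof -
  define w where "w = guidance k V ra R 0"
  define c where "c t = (x t - xT) * (V * sin (psi t)) - (y t - yT) * (V * cos (psi t))" for t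
  have "(\<lambda>s. range_to xT yT (x s) (y s)) = (\<lambda>_. R)" using circ by auto
  then have dps: "(psi has_real_derivative w) (at t)" for t
    using dpsi circ by (simp add: w_def)
  have R_nonneg: "0 \<le> R" using circ[of 0] by (auto simp: range_to_def)
  have range: "(x t - xT)^2 + (y t - yT)^2 = R^2" for t
    using circ[of t] by (auto simp: range_to_def)
  have V_eq: "V^2 = w * c t" for t
    unfolding c_def using unicycle_constant_range_turn_rate[OF _ dx dy dps range] V_pos by simp
  have turn: "V^2 = w^2 * R^2"
    using unicycle_constant_range_speed[OF _ dx dy dps range] V_pos by simp
  then have "w \<noteq> 0" "R \<noteq> 0" using V_pos by auto
  then have "R > 0" using R_nonneg by simp
  have "ra \<le> R" using \<open>w \<noteq> 0\<close> by (auto simp: w_def guidance_def split: if_splits)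
  then have w_eq: "w = - k * V * sqrt (1 - (ra / R)^2)"
    using guidance_at_range_ge[OF ra_nonneg _ \<open>R > 0\<close>] by (simp add: w_def)
  have "sqrt (1 - (ra / R)^2) > 0" using \<open>w \<noteq> 0\<close> w_eq \<open>ra \<le> R\<close> \<open>R > 0\<close> ra_nonneg
    by (auto simp: power_le_one intro!: real_sqrt_gt_zero order.not_eq_order_implies_strict)
  then have "(k > 0 \<longrightarrow> w < 0) \<and> (k < 0 \<longrightarrow> w > 0)"
    using w_eq V_pos by (auto simp: mult_neg_pos mult_pos_pos zero_less_mult_iff)
  moreover have "c t = V^2 / w" "deriv psi t = w" for t
    using V_eq[of t] \<open>w \<noteq> 0\<close> DERIV_imp_deriv[OF dps] by (auto simp: field_simps)
  ultimately show ?thesis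
    using radius_from_turn_rate[OF _ k_nz ra_nonneg \<open>ra \<le> R\<close> \<open>R > 0\<close> turn w_eq] V_pos
    by (auto simp: c_def divide_pos_neg)
qed

end
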